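(* Consider real variables $a_i,b_i,c_i,d_i$, $i=1,\dots,6$, subject to the linear relations \[c_1+b_1=c_2+b_2=c_3+b_3,\qquad -a_1+d_1=-a_2+d_2=-a_3+d_3,\] \[(a_{j+3},b_{j+3},c_{j+3},d_{j+3})=(-b_j,a_j,-d_j,c_j)\quad(j=1,2,3).\] For a constant $C$ let $P_i^{C}\coloneqq b_ic_i-a_id_i+C(a_i^2+c_i^2)$ and, for parameters $x,y,w$, let $P_{(x,y,w)}\coloneqq x(P_1^C+P_4^C)+y(P_2^C+P_5^C)+w(P_3^C+P_6^C)$. Define the complex-valued linear function \[Y_{(x,y,w)}\coloneqq(c_1+b_1)+x(-c_1+b_1)+y(-c_2+b_2)+w(-c_3+b_3)+i\big((-a_1+d_1)+x(-a_1-d_1)+y(-a_2-d_2)+w(-a_3-d_3)\big).\] Let $\alpha,\beta,\gamma\ge0$ with $\alpha+\beta+\gamma<1$, and for $0\le\lambda\le1$ let $K_\lambda\coloneqq\ker(Y_{(\lambda\alpha,\lambda\beta,\lambda\gamma)})$ (both real and imaginary parts vanish), a subspace of the space of variables satisfying the relations above. Then: (1) If $\alpha,\beta,\gamma>0$ and $0<C<1-(\alpha+\beta+\gamma)$, then $P_{(\alpha,\beta,\gamma)}$ is negative definite on $K_\lambda$ for all $0\le\lambda\le1$. (2) If $\alpha,\beta>0$, $\gamma=0$, and $C,\gamma'>0$ satisfy $0<C<1-(\alpha+\beta+\gamma')$, then $P_{(\alpha,\beta,\gamma')}$ is negative definite on $K_\lambda$ for all $0\le\lambda\le1$. (3) If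 $\alpha>0$, $\beta=\gamma=0$, and $C,\beta',\gamma'>0$ satisfy $0<C<1-(\alpha+\beta'+\gamma')$, then $P_{(\alpha,\beta',\gamma')}$ is negative definite on $K_\lambda$ for all $0\le\lambda\le1$. *)

theory Defs
  imports Complex_Main
begin

text \<open>A point of the variable space is given by four coordinate functions a, b, c, d;
  only the indices 1..6 are meaningful.\<close>

definition rel :: "(nat \<Rightarrow> real) \<Rightarrow> (nat \<Rightarrow> real) \<Rightarrow> (nat \<Rightarrow> real) \<Rightarrow> (nat \<Rightarrow> real) \<Rightarrow> bool" where
  "rel a b c d \<longleftrightarrow>
     c 1 + b 1 = c 2 + b 2 \<and> c 2 + b 2 = c 3 + b 3 \<and>
     - a 1 + d 1 = - a 2 + d 2 \<and> - a 2 + d 2 = - a 3 + d 3 \<and>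
     (\<forall>j\<in>{1,2,3}. a (j+3) = - b j \<and> b (j+3) = a j \<and> c (j+3) = - d j \<and> d (j+3) = c j)"

definition Pi :: "real \<Rightarrow> (nat \<Rightarrow> real) \<Rightarrow> (nat \<Rightarrow> real) \<Rightarrow> (nat \<Rightarrow> real) \<Rightarrow> (nat \<Rightarrow> real) \<Rightarrow> nat \<Rightarrow> real" where
  "Pi C a b c d i = b i * c i - a i * d i + C * ((a i)^2 + (c i)^2)"

definition PP :: "real \<Rightarrow> real \<Rightarrow> real \<Rightarrow> real \<Rightarrow> (nat \<Rightarrow> real) \<Rightarrow> (nat \<Rightarrow> real) \<Rightarrow> (nat \<Rightarrow> real) \<Rightarrow> (nat \<Rightarrow> real) \<Rightarrow> real" where
  "PP C x y w a b c d =
     x * (Pi C a b c d 1 + Pi C a b c d 4) + y * (Pi C a b c d 2 + Pi C a b c d 5)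
     + w * (Pi C a b c d 3 + Pi C a b c d 6)"

definition Y :: "real \<Rightarrow> real \<Rightarrow> real \<Rightarrow> (nat \<Rightarrow> real) \<Rightarrow> (nat \<Rightarrow> real) \<Rightarrow> (nat \<Rightarrow> real) \<Rightarrow> (nat \<Rightarrow> real) \<Rightarrow> complex" where
  "Y x y w a b c d =
     Complex ((c 1 + b 1) + x * (- c 1 + b 1) + y * (- c 2 + b 2) + w * (- c 3 + b 3))
             ((- a 1 + d 1) + x * (- a 1 - d 1) + y * (- a 2 - d 2) + w * (- a 3 - d 3))"

definition neg_def_on_ker ::
  "real \<Rightarrow> real \<Rightarrow> real \<Rightarrow> real \<Rightarrow> real \<Rightarrow> real \<Rightarrow> real \<Rightarrow> bool" where
  "neg_def_on_ker C x y w p q r \<longleftrightarrow>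
     (\<forall>a b c d. rel a b c d \<and> Y p q r a b c d = 0 \<and>
        (\<exists>i\<in>{1..6}. a i \<noteq> 0 \<or> b i \<noteq> 0 \<or> c i \<noteq> 0 \<or> d i \<noteq> 0)
        \<longrightarrow> PP C x y w a b c d < 0)"

end

theory Submission
  imports Defs
begin

text \<open>On the relation subspace the sums \<open>S = c\<^sub>j + b\<^sub>j\<close> and \<open>U = d\<^sub>j - a\<^sub>j\<close> do not depend on
  \<open>j\<close>, and in the coordinates \<open>S, U, t\<^sub>j = b\<^sub>j - c\<^sub>j, v\<^sub>j = a\<^sub>j + d\<^sub>j\<close> the form becomes
  \<open>2 P(p,q,r) = (1 + C) \<sigma> (S\<^sup>2 + U\<^sup>2) - (1 - C) Q\<close> with \<open>\<sigma> = p + q + r\<close> and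
  \<open>Q = p (t\<^sub>1\<^sup>2 + v\<^sub>1\<^sup>2) + q (t\<^sub>2\<^sup>2 + v\<^sub>2\<^sup>2) + r (t\<^sub>3\<^sup>2 + v\<^sub>3\<^sup>2)\<close>.
  On the kernel of \<open>Y(x,y,w)\<close>, \<open>S\<close> and \<open>U\<close> are weighted sums of the \<open>t\<^sub>j\<close> and \<open>v\<^sub>j\<close>, so
  Cauchy-Schwarz gives \<open>S\<^sup>2 + U\<^sup>2 \<le> \<sigma> Q\<close> as long as the weights \<open>x, y, w\<close> are dominated by
  \<open>p, q, r\<close>. Hence \<open>2 P \<le> ((1 + C) \<sigma>\<^sup>2 - (1 - C)) Q\<close>, which is negative because
  \<open>\<sigma> < 1 - C\<close> forces \<open>(1 + C) \<sigma>\<^sup>2 < (1 + C) (1 - C)\<^sup>2 \<le> 1 - C\<close>, and \<open>Q > 0\<close> off the origin.\<close>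

lemma weighted_cauchy_schwarz3:
  fixes x y w t1 t2 t3 :: real
  assumes "x \<ge> 0" "y \<ge> 0" "w \<ge> 0"
  shows "(x*t1 + y*t2 + w*t3)^2 \<le> (x + y + w) * (x*t1^2 + y*t2^2 + w*t3^2)"
proof -
  have "(x + y + w) * (x*t1^2 + y*t2^2 + w*t3^2) - (x*t1 + y*t2 + w*t3)^2
      = x*y*(t1 - t2)^2 + x*w*(t1 - t3)^2 + y*w*(t2 - t3)^2"
    by (simp add: power2_eq_square algebra_simps)
  moreover have "0 \<le> x*y*(t1 - t2)^2 + x*w*(t1 - t3)^2 + y*w*(t2 - t3)^2"
    using assms by (intro add_nonneg_nonneg mult_nonneg_nonneg) auto
  ultimately show ?thesis by linarith
qed

lemma weighted_sum_sq_le_of_dominated_weights: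
  fixes x y w p q r t1 t2 t3 :: real
  assumes "0 \<le> x" "x \<le> p" "0 \<le> y" "y \<le> q" "0 \<le> w" "w \<le> r"
  shows "(x*t1 + y*t2 + w*t3)^2 \<le> (p + q + r) * (p*t1^2 + q*t2^2 + r*t3^2)"
proof -
  have "(x*t1 + y*t2 + w*t3)^2 \<le> (x + y + w) * (x*t1^2 + y*t2^2 + w*t3^2)"
    using assms by (simp add: weighted_cauchy_schwarz3)
  also have "\<dots> \<le> (p + q + r) * (p*t1^2 + q*t2^2 + r*t3^2)"
    using assms by (intro mult_mono add_mono mult_right_mono) auto
  finally show ?thesis .
qed

lemma one_plus_mult_sq_less:
  fixes C \<sigma> :: real
  assumes "0 < C" "0 \<le> \<sigma>" "\<sigma> < 1 - C"
  shows "(1 + C) * \<sigma>^2 < 1 - C"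
proof -
  have "(1 + C) * \<sigma>^2 < (1 + C) * (1 - C)^2"
    using assms by (intro mult_strict_left_mono power_strict_mono) auto
  also have "\<dots> = (1 - C) - C^2 * (1 - C)"
    by (simp add: power2_eq_square algebra_simps)
  also have "\<dots> \<le> 1 - C"
    using assms by simp
  finally show ?thesis .
qed

lemma Pi_add_Pi_rotated:
  assumes "a k = - b j" "b k = a j" "c k = - d j" "d k = c j"
  shows "Pi C a b c d j + Pi C a b c d k
    = ((1 + C) * ((c j + b j)^2 + (d j - a j)^2) - (1 - C) * ((b j - c j)^2 + (a j + d j)^2)) / 2"
  unfolding Pi_def assms by (simp add: power2_eq_square algebra_simps)

definition skew_norm ::
    "real \<Rightarrow> real \<Rightarrow> real \<Rightarrow> (nat \<Rightarrow> real) \<Rightarrow> (nat \<Rightarrow> real) \<Rightarrow> (nat \<Rightarrow> real) \<Rightarrow> (nat \<Rightarrow> real) \<Rightarrow> real"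
  where "skew_norm p q r a b c d =
    p * ((b 1 - c 1)^2 + (a 1 + d 1)^2) + q * ((b 2 - c 2)^2 + (a 2 + d 2)^2)
    + r * ((b 3 - c 3)^2 + (a 3 + d 3)^2)"

lemma PP_eq_on_rel:
  assumes "rel a b c d"
  shows "PP C p q r a b c d
    = ((1 + C) * (p + q + r) * ((c 1 + b 1)^2 + (d 1 - a 1)^2) - (1 - C) * skew_norm p q r a b c d) / 2"
proof -
  have common: "c 2 + b 2 = c 1 + b 1" "c 3 + b 3 = c 1 + b 1"
    "d 2 - a 2 = d 1 - a 1" "d 3 - a 3 = d 1 - a 1"
    using assms unfolding rel_def by auto
  have rotated: "a 4 = - b 1" "b 4 = a 1" "c 4 = - d 1" "d 4 = c 1"
    "a 5 = - b 2" "b 5 = a 2" "c 5 = - d 2" "d 5 = c 2"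
    "a 6 = - b 3" "b 6 = a 3" "c 6 = - d 3" "d 6 = c 3"
    using assms unfolding rel_def by auto
  have pairs:
    "Pi C a b c d 1 + Pi C a b c d 4
      = ((1 + C) * ((c 1 + b 1)^2 + (d 1 - a 1)^2) - (1 - C) * ((b 1 - c 1)^2 + (a 1 + d 1)^2)) / 2"
    "Pi C a b c d 2 + Pi C a b c d 5
      = ((1 + C) * ((c 2 + b 2)^2 + (d 2 - a 2)^2) - (1 - C) * ((b 2 - c 2)^2 + (a 2 + d 2)^2)) / 2"
    "Pi C a b c d 3 + Pi C a b c d 6
      = ((1 + C) * ((c 3 + b 3)^2 + (d 3 - a 3)^2) - (1 - C) * ((b 3 - c 3)^2 + (a 3 + d 3)^2)) / 2"
    by (rule Pi_add_Pi_rotated; use rotated in simp)+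
  show ?thesis
    unfolding PP_def pairs common skew_norm_def by (simp add: field_simps)
qed

lemma Y_eq_0_iff:
  "Y x y w a b c d = 0 \<longleftrightarrow>
     c 1 + b 1 = - (x * (b 1 - c 1) + y * (b 2 - c 2) + w * (b 3 - c 3)) \<and>
     d 1 - a 1 = x * (a 1 + d 1) + y * (a 2 + d 2) + w * (a 3 + d 3)"
  unfolding Y_def complex_eq_iff by (simp add: algebra_simps)

lemma Y_eq_0_imp_sq_le_skew_norm:
  assumes "Y x y w a b c d = 0"
    and "0 \<le> x" "x \<le> p" "0 \<le> y" "y \<le> q" "0 \<le> w" "w \<le> r"
  shows "(c 1 + b 1)^2 + (d 1 - a 1)^2 \<le> (p + q + r) * skew_norm p q r a b c d"
proof -
  have S: "c 1 + b 1 = - (x * (b 1 - c 1) + y * (b 2 - c 2) + w * (b 3 - c 3))"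
    and U: "d 1 - a 1 = x * (a 1 + d 1) + y * (a 2 + d 2) + w * (a 3 + d 3)"
    using assms(1) unfolding Y_eq_0_iff by simp_all
  have "(c 1 + b 1)^2 \<le> (p + q + r) * (p * (b 1 - c 1)^2 + q * (b 2 - c 2)^2 + r * (b 3 - c 3)^2)"
    unfolding S power2_minus using assms by (intro weighted_sum_sq_le_of_dominated_weights)
  moreover have "(d 1 - a 1)^2 \<le> (p + q + r) * (p * (a 1 + d 1)^2 + q * (a 2 + d 2)^2 + r * (a 3 + d 3)^2)"
    unfolding U using assms by (intro weighted_sum_sq_le_of_dominated_weights)
  ultimately show ?thesis
    unfolding skew_norm_def by (simp add: algebra_simps)
qed

lemma rel_eq_zero_if_rotation_coords_zero:
  assumes "rel a b c d" "c 1 + b 1 = 0" "d 1 - a 1 = 0"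
    and "\<forall>j\<in>{1, 2, 3}. b j = c j \<and> a j + d j = 0"
    and "i \<in> {1..6}"
  shows "a i = 0 \<and> b i = 0 \<and> c i = 0 \<and> d i = 0"
proof -
  have zero: "a j = 0 \<and> b j = 0 \<and> c j = 0 \<and> d j = 0" if "j \<in> {1, 2, 3}" for j
    using assms that unfolding rel_def by auto
  have "i \<in> {1, 2, 3} \<or> i - 3 \<in> {1, 2, 3} \<and> i = (i - 3) + 3"
    using assms(5) by auto
  then show ?thesis
    using assms(1) zero unfolding rel_def by (metis neg_equal_0_iff_equal)
qed

lemma skew_norm_pos_on_ker:
  assumes "rel a b c d" "Y x y w a b c d = 0" "0 < p" "0 < q" "0 < r"
    and "\<exists>i\<in>{1..6}. a i \<noteq> 0 \<or> b i \<noteq> 0 \<or> c i \<noteq> 0 \<or> d i \<noteq> 0"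
  shows "0 < skew_norm p q r a b c d"
proof (rule ccontr)
  assume "\<not> 0 < skew_norm p q r a b c d"
  moreover have "0 \<le> p * ((b 1 - c 1)^2 + (a 1 + d 1)^2)" "0 \<le> q * ((b 2 - c 2)^2 + (a 2 + d 2)^2)"
    "0 \<le> r * ((b 3 - c 3)^2 + (a 3 + d 3)^2)"
    using assms by simp_all
  ultimately have "p * ((b 1 - c 1)^2 + (a 1 + d 1)^2) = 0" "q * ((b 2 - c 2)^2 + (a 2 + d 2)^2) = 0"
    "r * ((b 3 - c 3)^2 + (a 3 + d 3)^2) = 0"
    unfolding skew_norm_def by linarith+
  then have rotation_coords: "\<forall>j\<in>{1, 2, 3}. b j = c j \<and> a j + d j = 0"
    using assms(3-5) by simp
  then have "b 1 - c 1 = 0" "b 2 - c 2 = 0" "b 3 - c 3 = 0" "a 1 + d 1 = 0" "a 2 + d 2 = 0" "a 3 + d 3 = 0"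
    by simp_all
  then have "c 1 + b 1 = 0" "d 1 - a 1 = 0"
    using assms(2) unfolding Y_eq_0_iff by simp_all
  then show False
    using assms(1,6) rotation_coords rel_eq_zero_if_rotation_coords_zero by blast
qed

lemma neg_def_on_ker_of_dominated_weights:
  fixes C p q r x y w :: real
  assumes "0 < p" "0 < q" "0 < r" "0 < C" "C < 1 - (p + q + r)"
    and "0 \<le> x" "x \<le> p" "0 \<le> y" "y \<le> q" "0 \<le> w" "w \<le> r"
  shows "neg_def_on_ker C p q r x y w"
  unfolding neg_def_on_ker_def
proof (intro allI impI, elim conjE)
  fix a b c d :: "nat \<Rightarrow> real"
  assume rel: "rel a b c d" and ker: "Y x y w a b c d = 0"
    and "\<exists>i\<in>{1..6}. a i \<noteq> 0 \<or> b i \<noteq> 0 \<or> c i \<noteq> 0 \<or> d i \<noteq> 0"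
  then have Q_pos: "0 < skew_norm p q r a b c d"
    using assms by (intro skew_norm_pos_on_ker)
  define \<sigma> where "\<sigma> = p + q + r"
  have "0 \<le> \<sigma>" "\<sigma> < 1 - C"
    using assms unfolding \<sigma>_def by simp_all
  have "(1 + C) * \<sigma> * ((c 1 + b 1)^2 + (d 1 - a 1)^2) \<le> (1 + C) * \<sigma> * (\<sigma> * skew_norm p q r a b c d)"
    using Y_eq_0_imp_sq_le_skew_norm[OF ker] assms \<open>0 \<le> \<sigma>\<close> unfolding \<sigma>_def
    by (intro mult_left_mono) simp_all
  also have "\<dots> = (1 + C) * \<sigma>^2 * skew_norm p q r a b c d"
    by (simp add: power2_eq_square)
  also have "\<dots> < (1 - C) * skew_norm p q r a b c d"
    using Q_pos \<open>0 \<le> \<sigma>\<close> \<open>\<sigma> < 1 - C\<close> \<open>0 < C\<close> by (intro mult_strict_right_mono one_plus_mult_sq_less)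
  finally show "PP C p q r a b c d < 0"
    unfolding PP_eq_on_rel[OF rel] \<sigma>_def by simp
qed

theorem proposition8p9:
  fixes \<alpha> \<beta> \<gamma> :: real
  assumes "\<alpha> \<ge> 0" "\<beta> \<ge> 0" "\<gamma> \<ge> 0" "\<alpha> + \<beta> + \<gamma> < 1"
  shows "(\<forall>C. \<alpha> > 0 \<and> \<beta> > 0 \<and> \<gamma> > 0 \<and> 0 < C \<and> C < 1 - (\<alpha> + \<beta> + \<gamma>) \<longrightarrow>
            (\<forall>l::real. 0 \<le> l \<and> l \<le> 1 \<longrightarrow>
               neg_def_on_ker C \<alpha> \<beta> \<gamma> (l*\<alpha>) (l*\<beta>) (l*\<gamma>)))
       \<and> (\<forall>C \<gamma>'. \<alpha> > 0 \<and> \<beta> > 0 \<and> \<gamma> = 0 \<and> C > 0 \<and> \<gamma>' > 0 \<and> C < 1 - (\<alpha> + \<beta> + \<gamma>') \<longrightarrow>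
            (\<forall>l::real. 0 \<le> l \<and> l \<le> 1 \<longrightarrow>
               neg_def_on_ker C \<alpha> \<beta> \<gamma>' (l*\<alpha>) (l*\<beta>) (l*\<gamma>)))
       \<and> (\<forall>C \<beta>' \<gamma>'. \<alpha> > 0 \<and> \<beta> = 0 \<and> \<gamma> = 0 \<and> C > 0 \<and> \<beta>' > 0 \<and> \<gamma>' > 0
               \<and> C < 1 - (\<alpha> + \<beta>' + \<gamma>') \<longrightarrow>
            (\<forall>l::real. 0 \<le> l \<and> l \<le> 1 \<longrightarrow>
               neg_def_on_ker C \<alpha> \<beta>' \<gamma>' (l*\<alpha>) (l*\<beta>) (l*\<gamma>)))"
proof -
  have scaled: "0 \<le> l * u \<and> l * u \<le> u" if "0 \<le> l" "l \<le> 1" "0 \<le> u" for l u :: real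
    using that by (simp add: mult_left_le_one_le)
  show ?thesis
    using assms scaled by (auto intro!: neg_def_on_ker_of_dominated_weights)
qed

end
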